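(* Let $K\ge 1$, $N\ge 2$, and let ${\bm{p}}\in\Delta_K$ with $p_1\ge p_2\ge\dots\ge p_K$. For ${\bm{q}}\in\Delta_K$ let $L_N({\bm{p}},{\bm{q}})=\sum_{k=1}^K p_k(1-q_k)^N$ (the expected test loss of the memorization model, where the error on component $k$ is $e_k(n_k)=\mathbf{1}_{\{n_k=0\}}$ and ${\bm{n}}\sim\mathrm{Multinomial}(N,{\bm{q}})$). Then $$L^{\mathrm{same}}({\bm{p}}):=L_N({\bm{p}},{\bm{p}})=\sum_{k=1}^K p_k(1-p_k)^N,$$ $$L^*({\bm{p}}):=\min_{{\bm{q}}\in\Delta_K}L_N({\bm{p}},{\bm{q}})=(K_N({\bm{p}})-1)\,\delta_N({\bm{p}})+\sum_{k=K_N({\bm{p}})+1}^K p_k,$$ for some $\delta_N({\bm{p}})\in\big[p_{K_N({\bm{p}})+1},\,p_{K_N({\bm{p}})}\big)$ (with the convention $p_{K+1}=0$), where $$K_N({\bm{p}}):=\max\left\{s\le K:\ \sum_{k=1}^{s-1}\left(1-(p_s/p_k)^{\frac{1}{N-1}}\right)<1\right\}.$$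
   Context: $\Delta_K=\{{\bm{r}}\in\mathbb{R}^K:{\bm{r}}\ge0,\ \sum_k r_k=1\}$. Memorization model: each of $K$ tasks is memorizing a unique atom; the test distribution is the mixture of the tasks with proportions ${\bm{p}}$, training uses $N$ i.i.d. samples from the mixture with proportions ${\bm{q}}$, and the error on task $k$ is $1$ if no training example from task $k$ was seen and $0$ otherwise. *)

theory Defs
  imports Complex_Main
begin

text \<open>Vectors in the probability simplex are functions nat => real, indexed by 1..K
  (values outside 1..K are irrelevant).\<close>

definition simplex :: "nat \<Rightarrow> (nat \<Rightarrow> real) set" where
  "simplex K = {r. (\<forall>k\<in>{1..K}. 0 \<le> r k) \<and> (\<Sum>k=1..K. r k) = 1}"

definition LN :: "nat \<Rightarrow> nat \<Rightarrow> (nat \<Rightarrow> real) \<Rightarrow> (nat \<Rightarrow> real) \<Rightarrow> real" where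
  "LN N K p q = (\<Sum>k=1..K. p k * (1 - q k) ^ N)"

definition KN :: "nat \<Rightarrow> nat \<Rightarrow> (nat \<Rightarrow> real) \<Rightarrow> nat" where
  "KN N K p = Max {s \<in> {1..K}.
      (\<Sum>k=1..s-1. 1 - (p s / p k) powr (1 / (real N - 1))) < 1}"

definition pext :: "nat \<Rightarrow> (nat \<Rightarrow> real) \<Rightarrow> nat \<Rightarrow> real" where
  "pext K p j = (if j \<le> K then p j else 0)"

end

theory Submission
  imports Defs
begin

(* Since q |-> p_k (1 - q)^N is convex on [0, 1], a point q of the simplex minimises L_N(p, -)
   as soon as its marginal losses p_k (1 - q_k)^(N-1) equal a common level \<delta> wherever q_k > 0
   and are at most \<delta> elsewhere. Solving gives the water-filling allocation
   q_k = 1 - (\<delta> / p_k)^(1/(N-1)) on the s most likely tasks and q_k = 0 on the others; it is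
   admissible when p_(s+1) \<le> \<delta> \<le> p_s and the q_k sum to 1. For s = K_N(p) the total mass is
   < 1 at the level p_s and \<ge> 1 at the level p_(s+1) (this is how K_N(p) is defined), so the
   intermediate value theorem provides \<delta>. Each active task then contributes
   p_k (1 - q_k)^N = \<delta> (1 - q_k), and these sum to (s - 1) \<delta>. *)

lemma power_ge_tangent:
  fixes a y :: real
  assumes "0 \<le> a" "0 \<le> y" "n \<ge> 1"
  shows "a ^ n + real n * a ^ (n - 1) * (y - a) \<le> y ^ n"
  using assms(3)
proof (induction n rule: dec_induct)
  case base
  then show ?case by simp
next
  case (step n)
  then obtain n' where n': "n = Suc n'" by (cases n) auto
  have "y * (a ^ n + real n * a ^ (n - 1) * (y - a)) \<le> y * y ^ n"
    using step.IH assms(2) by (rule mult_left_mono)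
  moreover have "y * (a ^ n + real n * a ^ (n - 1) * (y - a))
      = a ^ Suc n + real (Suc n) * a ^ n * (y - a) + real n * a ^ (n - 1) * (y - a)\<^sup>2"
    unfolding n' by (simp add: algebra_simps power2_eq_square)
  moreover have "0 \<le> real n * a ^ (n - 1) * (y - a)\<^sup>2"
    using assms(1) by simp
  ultimately show ?case by simp
qed

lemma simplex_nonneg: "r \<in> simplex K \<Longrightarrow> k \<in> {1..K} \<Longrightarrow> 0 \<le> r k"
  by (simp add: simplex_def)

lemma simplex_sum: "r \<in> simplex K \<Longrightarrow> (\<Sum>k=1..K. r k) = 1"
  by (simp add: simplex_def)

lemma simplex_le_one:
  assumes "r \<in> simplex K" "k \<in> {1..K}"
  shows "r k \<le> 1"
proof -
  have "r k \<le> (\<Sum>k=1..K. r k)"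
    using assms by (intro member_le_sum) (auto simp: simplex_nonneg)
  then show ?thesis using simplex_sum[OF assms(1)] by simp
qed

lemma LN_minimal_if_marginal_losses_balanced:
  assumes q: "q \<in> simplex K" and r: "r \<in> simplex K" and "N \<ge> 1"
    and p_nonneg: "\<And>k. k \<in> {1..K} \<Longrightarrow> 0 \<le> p k"
    and marginal_le: "\<And>k. k \<in> {1..K} \<Longrightarrow> p k * (1 - q k) ^ (N - 1) \<le> \<mu>"
    and marginal_eq: "\<And>k. k \<in> {1..K} \<Longrightarrow> 0 < q k \<Longrightarrow> p k * (1 - q k) ^ (N - 1) = \<mu>"
  shows "LN N K p q \<le> LN N K p r"
proof -
  have term_bound: "p k * (1 - q k) ^ N + real N * \<mu> * (q k - r k) \<le> p k * (1 - r k) ^ N"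
    if k: "k \<in> {1..K}" for k
  proof -
    have "(1 - q k) ^ N + real N * (1 - q k) ^ (N - 1) * ((1 - r k) - (1 - q k)) \<le> (1 - r k) ^ N"
      using power_ge_tangent[of "1 - q k" "1 - r k" N] \<open>N \<ge> 1\<close>
        simplex_le_one[OF q k] simplex_le_one[OF r k] by simp
    from mult_left_mono[OF this p_nonneg[OF k]]
    have "p k * (1 - q k) ^ N + real N * (p k * (1 - q k) ^ (N - 1)) * (q k - r k)
        \<le> p k * (1 - r k) ^ N"
      by (simp add: algebra_simps)
    moreover have "\<mu> * (q k - r k) \<le> p k * (1 - q k) ^ (N - 1) * (q k - r k)"
    proof (cases "0 < q k")
      case True
      then show ?thesis using marginal_eq[OF k] by simp
    next
      case False
      then have "q k = 0" using simplex_nonneg[OF q k] by simp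
      then show ?thesis
        using marginal_le[OF k] simplex_nonneg[OF r k] by (simp add: mult_right_mono)
    qed
    then have "real N * \<mu> * (q k - r k) \<le> real N * (p k * (1 - q k) ^ (N - 1)) * (q k - r k)"
      by (simp add: mult.assoc mult_left_mono)
    ultimately show ?thesis by linarith
  qed
  have "LN N K p q + real N * \<mu> * ((\<Sum>k=1..K. q k) - (\<Sum>k=1..K. r k))
      = (\<Sum>k=1..K. p k * (1 - q k) ^ N + real N * \<mu> * (q k - r k))"
    unfolding LN_def by (simp add: sum.distrib sum_subtractf flip: sum_distrib_left)
  also have "\<dots> \<le> LN N K p r"
    unfolding LN_def by (intro sum_mono term_bound)
  finally show ?thesis using simplex_sum[OF q] simplex_sum[OF r] by simp
qed

definition waterfill_mass :: "nat \<Rightarrow> (nat \<Rightarrow> real) \<Rightarrow> nat \<Rightarrow> real \<Rightarrow> real" where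
  "waterfill_mass m p s \<mu> = (\<Sum>k=1..s. 1 - root m (\<mu> / p k))"

definition waterfill :: "nat \<Rightarrow> (nat \<Rightarrow> real) \<Rightarrow> nat \<Rightarrow> real \<Rightarrow> nat \<Rightarrow> real" where
  "waterfill m p s \<mu> k = (if k \<le> s then 1 - root m (\<mu> / p k) else 0)"

lemma waterfill_level_exists:
  assumes "lo \<le> hi" and p_pos: "\<And>k. k \<in> {1..s} \<Longrightarrow> 0 < p k"
    and "waterfill_mass m p s hi < 1" "1 \<le> waterfill_mass m p s lo"
  shows "\<exists>\<mu>. lo \<le> \<mu> \<and> \<mu> < hi \<and> waterfill_mass m p s \<mu> = 1"
proof -
  have "continuous_on {lo..hi} (waterfill_mass m p s)"
    unfolding waterfill_mass_def by (intro continuous_intros) (use p_pos in force)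
  then obtain \<mu> where "lo \<le> \<mu>" "\<mu> \<le> hi" "waterfill_mass m p s \<mu> = 1"
    using IVT2' assms by (metis less_imp_le)
  moreover have "\<mu> \<noteq> hi" using calculation assms(3) by auto
  ultimately show ?thesis by auto
qed

context
  fixes m s K :: nat and p :: "nat \<Rightarrow> real" and \<mu> :: real
  assumes m_pos: "0 < m" and s_le_K: "s \<le> K"
    and p_nonneg: "\<And>k. k \<in> {1..K} \<Longrightarrow> 0 \<le> p k"
    and p_pos: "\<And>k. k \<in> {1..s} \<Longrightarrow> 0 < p k"
    and level_nonneg: "0 \<le> \<mu>"
    and level_below_head: "\<And>k. k \<in> {1..s} \<Longrightarrow> \<mu> \<le> p k"
    and level_above_tail: "\<And>k. k \<in> {s+1..K} \<Longrightarrow> p k \<le> \<mu>"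
    and mass_one: "waterfill_mass m p s \<mu> = 1"
begin

lemma waterfill_marginal_loss:
  assumes "k \<in> {1..s}"
  shows "p k * (1 - waterfill m p s \<mu> k) ^ m = \<mu>"
  using assms p_pos[OF assms] level_nonneg m_pos by (simp add: waterfill_def)

lemma waterfill_nonneg:
  assumes "k \<in> {1..K}"
  shows "0 \<le> waterfill m p s \<mu> k"
proof (cases "k \<le> s")
  case True
  then have "\<mu> / p k \<le> 1"
    using assms level_below_head p_pos by simp
  then have "root m (\<mu> / p k) \<le> 1"
    using m_pos by simp
  then show ?thesis by (simp add: waterfill_def)
qed (simp add: waterfill_def)

lemma sum_waterfill: "(\<Sum>k=1..K. waterfill m p s \<mu> k) = 1"
proof -
  have "(\<Sum>k=1..K. waterfill m p s \<mu> k) = (\<Sum>k=1..s. waterfill m p s \<mu> k)"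
    using s_le_K by (intro sum.mono_neutral_right) (auto simp: waterfill_def)
  also have "\<dots> = waterfill_mass m p s \<mu>"
    unfolding waterfill_mass_def waterfill_def by simp
  finally show ?thesis using mass_one by simp
qed

lemma waterfill_in_simplex: "waterfill m p s \<mu> \<in> simplex K"
  unfolding simplex_def using waterfill_nonneg sum_waterfill by simp

lemma LN_waterfill:
  "LN (Suc m) K p (waterfill m p s \<mu>) = (real s - 1) * \<mu> + (\<Sum>k=s+1..K. p k)"
proof -
  let ?q = "waterfill m p s \<mu>"
  have "(\<Sum>k=1..s. p k * (1 - ?q k) ^ Suc m) = (\<Sum>k=1..s. \<mu> * (1 - ?q k))"
    using waterfill_marginal_loss by (intro sum.cong) (simp_all add: mult.assoc mult.left_commute)
  also have "\<dots> = \<mu> * (real s - waterfill_mass m p s \<mu>)"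
    by (simp add: waterfill_def waterfill_mass_def sum_subtractf flip: sum_distrib_left)
  finally have head: "(\<Sum>k=1..s. p k * (1 - ?q k) ^ Suc m) = (real s - 1) * \<mu>"
    using mass_one by simp
  have tail: "(\<Sum>k=s+1..K. p k * (1 - ?q k) ^ Suc m) = (\<Sum>k=s+1..K. p k)"
    by (intro sum.cong) (auto simp: waterfill_def)
  show ?thesis
    using sum.ub_add_nat[of 1 s "\<lambda>k. p k * (1 - ?q k) ^ Suc m" "K - s"] s_le_K head tail
    by (simp add: LN_def)
qed

lemma waterfill_minimizes_LN:
  assumes "r \<in> simplex K"
  shows "LN (Suc m) K p (waterfill m p s \<mu>) \<le> LN (Suc m) K p r"
proof (rule LN_minimal_if_marginal_losses_balanced[OF waterfill_in_simplex assms])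
  fix k assume k: "k \<in> {1..K}"
  show "p k * (1 - waterfill m p s \<mu> k) ^ (Suc m - 1) \<le> \<mu>"
  proof (cases "k \<le> s")
    case True
    then show ?thesis using k waterfill_marginal_loss by simp
  next
    case False
    then show ?thesis using k level_above_tail by (simp add: waterfill_def)
  qed
  show "p k * (1 - waterfill m p s \<mu> k) ^ (Suc m - 1) = \<mu>" if "0 < waterfill m p s \<mu> k"
    using that k waterfill_marginal_loss by (simp add: waterfill_def split: if_splits)
qed (use p_nonneg in auto)

end

lemma waterfill_mass_eq_powr:
  assumes "0 < m" "0 \<le> \<mu>" "\<And>k. k \<in> {1..s} \<Longrightarrow> 0 < p k"
  shows "waterfill_mass m p s \<mu> = (\<Sum>k=1..s. 1 - (\<mu> / p k) powr (1 / real m))"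
  unfolding waterfill_mass_def using assms
  by (intro sum.cong) (simp_all add: root_powr_inverse less_imp_le)

lemma KN_admissible:
  assumes "K \<ge> 1"
  shows "KN N K p \<in> {1..K}"
    and "(\<Sum>k=1..KN N K p - 1. 1 - (p (KN N K p) / p k) powr (1 / (real N - 1))) < 1"
proof -
  let ?S = "{s \<in> {1..K}. (\<Sum>k=1..s-1. 1 - (p s / p k) powr (1 / (real N - 1))) < 1}"
  have "1 \<in> ?S" using assms by simp
  then have "Max ?S \<in> ?S" by (intro Max_in) auto
  then show "KN N K p \<in> {1..K}"
    and "(\<Sum>k=1..KN N K p - 1. 1 - (p (KN N K p) / p k) powr (1 / (real N - 1))) < 1"
    unfolding KN_def by auto
qed

lemma KN_maximal:
  assumes "KN N K p < K"
  shows "1 \<le> (\<Sum>k=1..KN N K p. 1 - (p (KN N K p + 1) / p k) powr (1 / (real N - 1)))"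
proof (rule ccontr)
  let ?S = "{s \<in> {1..K}. (\<Sum>k=1..s-1. 1 - (p s / p k) powr (1 / (real N - 1))) < 1}"
  assume "\<not> ?thesis"
  then have "KN N K p + 1 \<in> ?S" using assms by simp
  then have "KN N K p + 1 \<le> Max ?S" by (intro Max_ge) auto
  then show False unfolding KN_def by simp
qed

context
  fixes K N :: nat and p :: "nat \<Rightarrow> real"
  assumes K_pos: "K \<ge> 1" and N_ge_2: "N \<ge> 2" and p_simplex: "p \<in> simplex K"
    and p_antimono: "\<And>i j. 1 \<le> i \<Longrightarrow> i \<le> j \<Longrightarrow> j \<le> K \<Longrightarrow> p j \<le> p i"
begin

lemmas KN_range = KN_admissible(1)[OF K_pos, where N = N and p = p]
   and KN_condition = KN_admissible(2)[OF K_pos, where N = N and p = p]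

lemma prob_KN_pos: "0 < p (KN N K p)"
proof (rule ccontr)
  let ?s = "KN N K p"
  assume "\<not> 0 < p ?s"
  then have ps: "p ?s = 0"
    using KN_range simplex_nonneg[OF p_simplex] by force
  have "0 < p 1"
  proof (rule ccontr)
    assume "\<not> 0 < p 1"
    then have "(\<Sum>k=1..K. p k) \<le> 0"
      using p_antimono[of 1] by (intro sum_nonpos) force
    then show False using simplex_sum[OF p_simplex] by simp
  qed
  then have "?s \<ge> 2" using ps KN_range by (cases "?s = 1") auto
  moreover have "(\<Sum>k=1..?s - 1. 1 - (p ?s / p k) powr (1 / (real N - 1))) = real (?s - 1)"
    using ps by simp
  ultimately show False using KN_condition by simp
qed

lemma prob_pos_below_KN: "k \<in> {1..KN N K p} \<Longrightarrow> 0 < p k"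
  using prob_KN_pos p_antimono KN_range by (meson atLeastAtMost_iff le_trans less_le_trans)

lemma waterfill_mass_at_KN: "waterfill_mass (N - 1) p (KN N K p) (p (KN N K p)) < 1"
proof -
  let ?s = "KN N K p"
  obtain t where t: "?s = Suc t" using KN_range by (cases ?s) auto
  have "waterfill_mass (N - 1) p ?s (p ?s) = waterfill_mass (N - 1) p (?s - 1) (p ?s)"
    using prob_KN_pos N_ge_2 unfolding waterfill_mass_def t by simp
  also have "\<dots> = (\<Sum>k=1..?s - 1. 1 - (p ?s / p k) powr (1 / (real N - 1)))"
    using N_ge_2 prob_KN_pos prob_pos_below_KN
    by (subst waterfill_mass_eq_powr) (auto simp: of_nat_diff less_imp_le)
  finally show ?thesis using KN_condition by simp
qed

lemma waterfill_mass_at_next: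
  "1 \<le> waterfill_mass (N - 1) p (KN N K p) (pext K p (KN N K p + 1))"
proof (cases "KN N K p < K")
  case True
  then show ?thesis
    using KN_maximal[OF True] N_ge_2 prob_pos_below_KN
      simplex_nonneg[OF p_simplex, of "KN N K p + 1"]
    by (subst waterfill_mass_eq_powr) (auto simp: pext_def of_nat_diff)
next
  case False
  then show ?thesis
    using KN_range by (simp add: pext_def waterfill_mass_def)
qed

end

theorem theorem4p2:
  fixes K N :: nat and p :: "nat \<Rightarrow> real"
  assumes "K \<ge> 1" and "N \<ge> 2"
    and "p \<in> simplex K"
    and "\<And>i j. 1 \<le> i \<Longrightarrow> i \<le> j \<Longrightarrow> j \<le> K \<Longrightarrow> p j \<le> p i"
  shows "LN N K p p = (\<Sum>k=1..K. p k * (1 - p k) ^ N)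
    \<and> (\<exists>\<delta>. pext K p (KN N K p + 1) \<le> \<delta> \<and> \<delta> < p (KN N K p)
        \<and> (\<exists>q\<in>simplex K. LN N K p q =
              (real (KN N K p) - 1) * \<delta> + (\<Sum>k=KN N K p + 1..K. p k))
        \<and> (\<forall>q\<in>simplex K.
              (real (KN N K p) - 1) * \<delta> + (\<Sum>k=KN N K p + 1..K. p k) \<le> LN N K p q))"
proof -
  define s where "s = KN N K p"
  define m where "m = N - 1"
  have N: "N = Suc m" "0 < m" using assms(2) unfolding m_def by auto
  have s: "s \<in> {1..K}" unfolding s_def using KN_admissible(1)[OF assms(1)] .
  then have s_le_K: "s \<le> K" by simp
  have p_nonneg: "\<And>k. k \<in> {1..K} \<Longrightarrow> 0 \<le> p k" using assms(3) by (rule simplex_nonneg)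
  have p_pos: "\<And>k. k \<in> {1..s} \<Longrightarrow> 0 < p k" unfolding s_def using prob_pos_below_KN[OF assms] .
  have "pext K p (s + 1) \<le> p s" using assms(4) s p_nonneg by (auto simp: pext_def)
  then obtain \<delta> where \<delta>: "pext K p (s + 1) \<le> \<delta>" "\<delta> < p s" "waterfill_mass m p s \<delta> = 1"
    using waterfill_level_exists p_pos waterfill_mass_at_KN[OF assms] waterfill_mass_at_next[OF assms]
    unfolding s_def m_def by blast
  have level_nonneg: "0 \<le> \<delta>" using \<delta>(1) p_nonneg[of "s + 1"] by (auto simp: pext_def split: if_splits)
  have level_below_head: "\<And>k. k \<in> {1..s} \<Longrightarrow> \<delta> \<le> p k" using \<delta>(2) assms(4) s by force
  have level_above_tail: "\<And>k. k \<in> {s+1..K} \<Longrightarrow> p k \<le> \<delta>"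
    using \<delta>(1) assms(4)[of "s + 1"] s by (force simp: pext_def)
  note level = N(2) s_le_K p_nonneg p_pos level_nonneg level_below_head level_above_tail \<delta>(3)
  have "\<exists>q\<in>simplex K. LN N K p q = (real s - 1) * \<delta> + (\<Sum>k=s+1..K. p k)"
    using waterfill_in_simplex[OF level] LN_waterfill[OF level] unfolding N(1) by blast
  moreover have "\<forall>q\<in>simplex K. (real s - 1) * \<delta> + (\<Sum>k=s+1..K. p k) \<le> LN N K p q"
    using waterfill_minimizes_LN[OF level] LN_waterfill[OF level] unfolding N(1) by simp
  ultimately show ?thesis using \<delta>(1,2) unfolding s_def LN_def by blast
qed

end
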